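(* Let $A,B$ be non-empty sets, $I$ a non-empty index set, $\{V_i\}_{i\in I}\subseteq\mathcal R(A)$, $\{W_i\}_{i\in I}\subseteq\mathcal R(B)$, ${\cal A}=(A,I,V_i)$, ${\cal B}=(B,I,W_i)$, let $R\in\mathcal R(A,B)$ be a uniform fuzzy relation and $Z\in\mathcal R(A,B)$ with $R\le Z$. Then $R$ is a solution to $WL^{2\text{-}5}(A,B,I,V_i,W_i,Z)$ if and only if all of the following hold: (i) $E_A^R$ is a solution to $WL^{1\text{-}4}(A,I,V_i,Z\circ Z^{-1})$; (ii) $E_B^R$ is a solution to $WL^{1\text{-}5}(B,I,W_i,Z^{-1}\circ Z)$; (iii) $\widetilde R$ is an isomorphism of the quotient fuzzy relational systems ${\cal A}/E_A^R$ and ${\cal B}/E_B^R$.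
   Context: $\mathcal L=(L,\wedge,\vee,\otimes,\to,0,1)$ is a complete residuated lattice; $x\leftrightarrow y=(x\to y)\wedge(y\to x)$. For non-empty sets $X,Y$, $\mathcal R(X,Y)$ is the set of fuzzy relations $X\times Y\to L$, $\mathcal R(X)=\mathcal R(X,X)$, ordered pointwise; $R^{-1}(y,x)=R(x,y)$; $(R\circ S)(x,t)=\bigvee_{y}R(x,y)\otimes S(y,t)$. For $R\in\mathcal R(A,B)$: kernel $E_A^R(a_1,a_2)=\bigwedge_{b\in B}R(a_1,b)\leftrightarrow R(a_2,b)$; co-kernel $E_B^R(b_1,b_2)=\bigwedge_{a\in A}R(a,b_1)\leftrightarrow R(a,b_2)$ (both fuzzy equivalences). $R$ is uniform if every $a$ has some $b$ with $R(a,b)=1$, every $b$ has some $a$ with $R(a,b)=1$, and $R(a,b_1)\otimes R(a,b_2)\le E_B^R(b_1,b_2)$ for all $a,b_1,b_2$. For uniform $R$, with $E=E_A^R$, $F=E_B^R$, the map $\widetilde R:A/E\to B/F$, $\widetilde R(E_a)=F_{\psi(a)}$, where $\psi:A\to B$ is any function with $R(a,\psi(a))=1$ for all $a$, is well defined and bijective. For a fuzzy equivalence $E$ on $X$ (reflexive, symmetric, $E(x,y)\otimes E(y,z)\le E(x,z)$): $E_x(y)=E(x,y)$, $X/E=\{E_x\}$; the quotient of ${\cal X}=(X,I,V_i)$ is ${\cal X}/E=(X/E,I,V_i^{X/E})$ with $V_i^{X/E}(E_{x_1},E_{x_2})=(E\circ V_i\circ E)(x_1,x_2)$. An isomorphism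 of $(X,I,V_i)$ and $(Y,I,W_i)$ is a bijection $\varphi$ with $V_i(x_1,x_2)=W_i(\varphi(x_1),\varphi(x_2))$ for all $x_1,x_2$, $i$. $WL^{2\text{-}5}(A,B,I,V_i,W_i,Z)$ (unknown $U\in\mathcal R(A,B)$): $V_i\circ U=U\circ W_i$ for all $i$, and $U\le Z$. For $\{V_i\}\subseteq\mathcal R(X)$, $W\in\mathcal R(X)$, unknown $U\in\mathcal R(X)$: $WL^{1\text{-}4}(X,I,V_i,W)$: $U\circ V_i\le V_i\circ U$ and $U^{-1}\circ V_i\le V_i\circ U^{-1}$ for all $i$, $U\le W$, $U^{-1}\le W$; $WL^{1\text{-}5}(X,I,V_i,W)$: $V_i\circ U\le U\circ V_i$ and $V_i\circ U^{-1}\le U^{-1}\circ V_i$ for all $i$, $U\le W$, $U^{-1}\le W$. *)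

theory Defs
  imports Main
begin

text \<open>Complete residuated lattice: a complete lattice (0 = bot, 1 = top) with a
commutative monoid operation rmult having unit top, and its residuum rimp
(adjointness: x rmult y <= z iff x <= rimp y z).\<close>

class cres_lattice = complete_lattice +
  fixes rmult :: "'a \<Rightarrow> 'a \<Rightarrow> 'a" (infixl "\<otimes>" 70)
    and rimp :: "'a \<Rightarrow> 'a \<Rightarrow> 'a"
  assumes rmult_assoc: "(x \<otimes> y) \<otimes> z = x \<otimes> (y \<otimes> z)"
    and rmult_commute: "x \<otimes> y = y \<otimes> x"
    and rmult_top: "x \<otimes> top = x"
    and residuation: "x \<otimes> y \<le> z \<longleftrightarrow> x \<le> rimp y z"

definition biimp :: "'l::cres_lattice \<Rightarrow> 'l \<Rightarrow> 'l" where
  "biimp x y = inf (rimp x y) (rimp y x)"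

text \<open>Fuzzy relations between (the carriers given by) types 'a and 'b.
Non-empty sets A, B, I are modelled by types (types are non-empty).\<close>

definition rcomp :: "('a \<Rightarrow> 'b \<Rightarrow> 'l::cres_lattice) \<Rightarrow> ('b \<Rightarrow> 'c \<Rightarrow> 'l) \<Rightarrow> 'a \<Rightarrow> 'c \<Rightarrow> 'l" where
  "rcomp R S x t = (SUP y. R x y \<otimes> S y t)"

definition rconv :: "('a \<Rightarrow> 'b \<Rightarrow> 'l) \<Rightarrow> 'b \<Rightarrow> 'a \<Rightarrow> 'l" where
  "rconv R y x = R x y"

definition kernel :: "('a \<Rightarrow> 'b \<Rightarrow> 'l::cres_lattice) \<Rightarrow> 'a \<Rightarrow> 'a \<Rightarrow> 'l" where
  "kernel R a1 a2 = (INF b. biimp (R a1 b) (R a2 b))"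

definition cokernel :: "('a \<Rightarrow> 'b \<Rightarrow> 'l::cres_lattice) \<Rightarrow> 'b \<Rightarrow> 'b \<Rightarrow> 'l" where
  "cokernel R b1 b2 = (INF a. biimp (R a b1) (R a b2))"

definition uniform_rel :: "('a \<Rightarrow> 'b \<Rightarrow> 'l::cres_lattice) \<Rightarrow> bool" where
  "uniform_rel R \<longleftrightarrow> (\<forall>a. \<exists>b. R a b = top) \<and> (\<forall>b. \<exists>a. R a b = top)
     \<and> (\<forall>a b1 b2. R a b1 \<otimes> R a b2 \<le> cokernel R b1 b2)"

text \<open>Equivalence classes E_x are the functions E x; the quotient set X/E is range E.\<close>

definition quot_rel :: "('a \<Rightarrow> 'a \<Rightarrow> 'l::cres_lattice) \<Rightarrow> ('a \<Rightarrow> 'a \<Rightarrow> 'l) \<Rightarrow>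
    ('a \<Rightarrow> 'l) \<Rightarrow> ('a \<Rightarrow> 'l) \<Rightarrow> 'l" where
  "quot_rel E V c1 c2 = rcomp (rcomp E V) E (SOME x1. E x1 = c1) (SOME x2. E x2 = c2)"

text \<open>psi: a function with R a (psi a) = 1; Rtilde (E_a) = F_(psi a).\<close>

definition psi :: "('a \<Rightarrow> 'b \<Rightarrow> 'l::cres_lattice) \<Rightarrow> 'a \<Rightarrow> 'b" where
  "psi R a = (SOME b. R a b = top)"

definition rtilde :: "('a \<Rightarrow> 'b \<Rightarrow> 'l::cres_lattice) \<Rightarrow> ('a \<Rightarrow> 'l) \<Rightarrow> ('b \<Rightarrow> 'l)" where
  "rtilde R c = cokernel R (psi R (SOME a. kernel R a = c))"

definition fs_iso :: "'x set \<Rightarrow> ('i \<Rightarrow> 'x \<Rightarrow> 'x \<Rightarrow> 'l) \<Rightarrow> 'y set \<Rightarrow> ('i \<Rightarrow> 'y \<Rightarrow> 'y \<Rightarrow> 'l)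
    \<Rightarrow> ('x \<Rightarrow> 'y) \<Rightarrow> bool" where
  "fs_iso X V Y W \<phi> \<longleftrightarrow> bij_betw \<phi> X Y \<and>
     (\<forall>i. \<forall>x1\<in>X. \<forall>x2\<in>X. V i x1 x2 = W i (\<phi> x1) (\<phi> x2))"

definition WL25 :: "('i \<Rightarrow> 'a \<Rightarrow> 'a \<Rightarrow> 'l::cres_lattice) \<Rightarrow> ('i \<Rightarrow> 'b \<Rightarrow> 'b \<Rightarrow> 'l)
    \<Rightarrow> ('a \<Rightarrow> 'b \<Rightarrow> 'l) \<Rightarrow> ('a \<Rightarrow> 'b \<Rightarrow> 'l) \<Rightarrow> bool" where
  "WL25 V W Z U \<longleftrightarrow> (\<forall>i. rcomp (V i) U = rcomp U (W i)) \<and> U \<le> Z"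

definition WL14 :: "('i \<Rightarrow> 'a \<Rightarrow> 'a \<Rightarrow> 'l::cres_lattice) \<Rightarrow> ('a \<Rightarrow> 'a \<Rightarrow> 'l)
    \<Rightarrow> ('a \<Rightarrow> 'a \<Rightarrow> 'l) \<Rightarrow> bool" where
  "WL14 V W U \<longleftrightarrow> (\<forall>i. rcomp U (V i) \<le> rcomp (V i) U \<and> rcomp (rconv U) (V i) \<le> rcomp (V i) (rconv U))
     \<and> U \<le> W \<and> rconv U \<le> W"

definition WL15 :: "('i \<Rightarrow> 'a \<Rightarrow> 'a \<Rightarrow> 'l::cres_lattice) \<Rightarrow> ('a \<Rightarrow> 'a \<Rightarrow> 'l)
    \<Rightarrow> ('a \<Rightarrow> 'a \<Rightarrow> 'l) \<Rightarrow> bool" where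
  "WL15 V W U \<longleftrightarrow> (\<forall>i. rcomp (V i) U \<le> rcomp U (V i) \<and> rcomp (V i) (rconv U) \<le> rcomp (rconv U) (V i))
     \<and> U \<le> W \<and> rconv U \<le> W"

end

theory Submission
  imports Defs
begin

text \<open>For uniform R every a is related with degree 1 to some psi a, and then
R a b = F (psi a) b and E a1 a2 = F (psi a1) (psi a2), where E and F are the kernel and the
co-kernel of R. Hence E = R \<circ> R\<inverse>, F = R\<inverse> \<circ> R, E \<circ> R = R = R \<circ> F, and the map
E_a \<mapsto> F_(psi a) is a bijection of the quotient sets. Conjugating V \<circ> R = R \<circ> W with R turns
it into the compatibility of E with V and of F with W together with the identity
E \<circ> V \<circ> E = R \<circ> W \<circ> R\<inverse>, which is exactly the statement that this bijection is an
isomorphism of the quotient systems; conversely these three facts let R be moved back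
across V.\<close>

section \<open>Residuated lattices\<close>

context cres_lattice
begin

lemma rmult_mono_left: "x \<le> y \<Longrightarrow> x \<otimes> z \<le> y \<otimes> z"
  by (metis order.refl order.trans residuation)

lemma rmult_mono: "x \<le> y \<Longrightarrow> u \<le> v \<Longrightarrow> x \<otimes> u \<le> y \<otimes> v"
  by (metis order.trans rmult_commute rmult_mono_left)

lemma top_rmult [simp]: "top \<otimes> x = x"
  by (metis rmult_commute rmult_top)

lemma SUP_rmult: "(SUP i. f i) \<otimes> x = (SUP i. f i \<otimes> x)"
proof (rule order.antisym)
  have "(SUP i. f i) \<le> rimp x (SUP i. f i \<otimes> x)"
    by (rule SUP_least) (subst residuation[symmetric], rule SUP_upper, simp)
  then show "(SUP i. f i) \<otimes> x \<le> (SUP i. f i \<otimes> x)"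
    by (simp add: residuation)
  show "(SUP i. f i \<otimes> x) \<le> (SUP i. f i) \<otimes> x"
    by (rule SUP_least) (simp add: rmult_mono_left SUP_upper)
qed

lemma rmult_SUP: "x \<otimes> (SUP i. f i) = (SUP i. x \<otimes> f i)"
  by (simp add: rmult_commute[of x] SUP_rmult)

lemma rmult_rimp_le: "x \<otimes> rimp x y \<le> y"
  by (metis order.refl residuation rmult_commute)

lemma rimp_refl [simp]: "rimp x x = top"
  by (metis order.antisym residuation top_greatest top_rmult order.refl)

lemma rimp_top [simp]: "rimp top x = x"
  by (metis order.antisym order.refl residuation rmult_top)

lemma rimp_rmult_rimp_le: "rimp x y \<otimes> rimp y z \<le> rimp x z"
proof -
  have "(rimp x y \<otimes> rimp y z) \<otimes> x = (x \<otimes> rimp x y) \<otimes> rimp y z"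
    by (metis rmult_assoc rmult_commute)
  also have "\<dots> \<le> y \<otimes> rimp y z" by (rule rmult_mono_left[OF rmult_rimp_le])
  also have "\<dots> \<le> z" by (rule rmult_rimp_le)
  finally show ?thesis by (simp add: residuation)
qed

end

declare rmult_top [simp]

lemma biimp_refl [simp]: "biimp x x = top"
  by (simp add: biimp_def)

lemma biimp_sym: "biimp x y = biimp y x"
  by (simp add: biimp_def inf_commute)

lemma biimp_trans: "biimp x y \<otimes> biimp y z \<le> biimp x z"
proof -
  have "biimp x y \<otimes> biimp y z \<le> rimp x y \<otimes> rimp y z"
    by (intro rmult_mono) (simp_all add: biimp_def)
  then have "biimp x y \<otimes> biimp y z \<le> rimp x z"
    by (rule order.trans[OF _ rimp_rmult_rimp_le])
  moreover have "biimp x y \<otimes> biimp y z \<le> rimp z y \<otimes> rimp y x"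
    by (subst rmult_commute, intro rmult_mono) (simp_all add: biimp_def)
  then have "biimp x y \<otimes> biimp y z \<le> rimp z x"
    by (rule order.trans[OF _ rimp_rmult_rimp_le])
  ultimately show ?thesis by (simp add: biimp_def)
qed

section \<open>Composition of fuzzy relations\<close>

lemma rcomp_assoc: "rcomp (rcomp R S) T = rcomp R (rcomp S T)"
proof (intro ext)
  fix x t
  have "rcomp (rcomp R S) T x t = (SUP z. SUP y. (R x y \<otimes> S y z) \<otimes> T z t)"
    by (simp add: rcomp_def SUP_rmult)
  also have "\<dots> = (SUP y. SUP z. R x y \<otimes> (S y z \<otimes> T z t))"
    by (subst SUP_commute) (simp add: rmult_assoc)
  also have "\<dots> = rcomp R (rcomp S T) x t"
    by (simp add: rcomp_def rmult_SUP)
  finally show "rcomp (rcomp R S) T x t = rcomp R (rcomp S T) x t" .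
qed

lemma rcomp_mono: "R \<le> R' \<Longrightarrow> S \<le> S' \<Longrightarrow> rcomp R S \<le> rcomp R' S'"
  unfolding le_fun_def rcomp_def by (intro allI SUP_mono) (blast intro: rmult_mono)

lemma rconv_mono: "R \<le> R' \<Longrightarrow> rconv R \<le> rconv R'"
  unfolding le_fun_def rconv_def by auto

lemma rcomp_reflexive_left:
  assumes "\<And>y. E y y = top"
  shows "S \<le> rcomp E S"
proof (intro le_funI)
  fix x z
  have "E x x \<otimes> S x z \<le> (SUP y. E x y \<otimes> S y z)" by (rule SUP_upper) simp
  then show "S x z \<le> rcomp E S x z" by (simp add: rcomp_def assms)
qed

lemma rcomp_reflexive_right:
  assumes "\<And>y. E y y = top"
  shows "S \<le> rcomp S E"
proof (intro le_funI)
  fix x z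
  have "S x z \<otimes> E z z \<le> (SUP y. S x y \<otimes> E y z)" by (rule SUP_upper) simp
  then show "S x z \<le> rcomp S E x z" by (simp add: rcomp_def assms)
qed

lemma rcomp_absorb_left:
  assumes "\<And>y. E y y = top" and "\<And>x y z. E x y \<otimes> S y z \<le> S x z"
  shows "rcomp E S = S"
proof (rule order.antisym)
  show "rcomp E S \<le> S"
    unfolding le_fun_def rcomp_def using assms(2) by (auto intro: SUP_least)
qed (rule rcomp_reflexive_left[OF assms(1)])

lemma rcomp_absorb_right:
  assumes "\<And>y. E y y = top" and "\<And>x y z. S x y \<otimes> E y z \<le> S x z"
  shows "rcomp S E = S"
proof (rule order.antisym)
  show "rcomp S E \<le> S"
    unfolding le_fun_def rcomp_def using assms(2) by (auto intro: SUP_least)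
qed (rule rcomp_reflexive_right[OF assms(1)])

section \<open>Fuzzy equivalences\<close>

definition fuzzy_equiv :: "('a \<Rightarrow> 'a \<Rightarrow> 'l::cres_lattice) \<Rightarrow> bool" where
  "fuzzy_equiv E \<longleftrightarrow> (\<forall>x. E x x = top) \<and> (\<forall>x y. E x y = E y x)
     \<and> (\<forall>x y z. E x y \<otimes> E y z \<le> E x z)"

lemma fuzzy_equiv_refl: "fuzzy_equiv E \<Longrightarrow> E x x = top"
  and fuzzy_equiv_sym: "fuzzy_equiv E \<Longrightarrow> E x y = E y x"
  and fuzzy_equiv_trans: "fuzzy_equiv E \<Longrightarrow> E x y \<otimes> E y z \<le> E x z"
  by (simp_all add: fuzzy_equiv_def)

lemma cokernel_fuzzy_equiv: "fuzzy_equiv (cokernel R)"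
  unfolding fuzzy_equiv_def
proof (intro conjI allI)
  fix x y z
  show "cokernel R x x = top" by (simp add: cokernel_def)
  show "cokernel R x y = cokernel R y x" by (simp add: cokernel_def biimp_sym)
  have "cokernel R x y \<otimes> cokernel R y z \<le> biimp (R a x) (R a z)" for a
  proof -
    have "cokernel R x y \<otimes> cokernel R y z \<le> biimp (R a x) (R a y) \<otimes> biimp (R a y) (R a z)"
      unfolding cokernel_def by (intro rmult_mono INF_lower) simp_all
    then show ?thesis by (rule order.trans[OF _ biimp_trans])
  qed
  then show "cokernel R x y \<otimes> cokernel R y z \<le> cokernel R x z"
    unfolding cokernel_def[of R x z] by (rule INF_greatest)
qed

lemma kernel_eq_cokernel_rconv: "kernel R = cokernel (rconv R)"
  by (simp add: fun_eq_iff kernel_def cokernel_def rconv_def)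

lemma kernel_fuzzy_equiv: "fuzzy_equiv (kernel R)"
  by (simp add: kernel_eq_cokernel_rconv cokernel_fuzzy_equiv)

lemma fuzzy_equiv_class_eq_iff:
  assumes "fuzzy_equiv E"
  shows "E x = E y \<longleftrightarrow> E x y = top"
proof
  assume top: "E x y = top"
  show "E x = E y"
  proof
    fix z
    have "E x z \<le> E y z"
      using fuzzy_equiv_trans[OF assms, of y x z] by (simp add: top fuzzy_equiv_sym[OF assms, of y x])
    moreover have "E y z \<le> E x z"
      using fuzzy_equiv_trans[OF assms, of x y z] by (simp add: top)
    ultimately show "E x z = E y z" by (rule order.antisym)
  qed
qed (simp add: fuzzy_equiv_refl[OF assms])

lemma kernel_fuzzy_equiv_self:
  assumes "fuzzy_equiv E"
  shows "kernel E = E"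
proof (intro ext order.antisym)
  fix x y
  have "kernel E x y \<le> rimp (E y y) (E x y)"
    unfolding kernel_def biimp_def by (rule INF_lower2[of y]) simp_all
  then show "kernel E x y \<le> E x y" by (simp add: fuzzy_equiv_refl[OF assms])
  have "E x y \<le> rimp (E x b) (E y b)" "E x y \<le> rimp (E y b) (E x b)" for b
    using fuzzy_equiv_trans[OF assms, of y x b] fuzzy_equiv_trans[OF assms, of x y b]
    by (simp_all add: residuation[symmetric] rmult_commute fuzzy_equiv_sym[OF assms, of x y])
  then show "E x y \<le> kernel E x y"
    unfolding kernel_def biimp_def by (simp add: INF_greatest)
qed

lemma rconv_fuzzy_equiv: "fuzzy_equiv E \<Longrightarrow> rconv E = E"
  by (simp add: fun_eq_iff rconv_def fuzzy_equiv_sym)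

lemma rcomp_fuzzy_equiv_self: "fuzzy_equiv E \<Longrightarrow> rcomp E E = E"
  by (rule rcomp_absorb_left) (simp_all add: fuzzy_equiv_refl fuzzy_equiv_trans)

lemma fuzzy_equiv_rcomp_le_iff:
  assumes "fuzzy_equiv E"
  shows "rcomp E V \<le> rcomp V E \<longleftrightarrow> rcomp (rcomp E V) E = rcomp V E"
proof
  assume le: "rcomp E V \<le> rcomp V E"
  show "rcomp (rcomp E V) E = rcomp V E"
  proof (rule order.antisym)
    have "rcomp (rcomp E V) E \<le> rcomp (rcomp V E) E" using le by (rule rcomp_mono) simp
    also have "\<dots> = rcomp V E" by (simp add: rcomp_assoc rcomp_fuzzy_equiv_self[OF assms])
    finally show "rcomp (rcomp E V) E \<le> rcomp V E" .
    show "rcomp V E \<le> rcomp (rcomp E V) E"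
      unfolding rcomp_assoc by (rule rcomp_reflexive_left) (rule fuzzy_equiv_refl[OF assms])
  qed
next
  assume "rcomp (rcomp E V) E = rcomp V E"
  then show "rcomp E V \<le> rcomp V E"
    using rcomp_reflexive_right[of E "rcomp E V"] by (simp add: fuzzy_equiv_refl[OF assms])
qed

lemma fuzzy_equiv_rcomp_ge_iff:
  assumes "fuzzy_equiv F"
  shows "rcomp W F \<le> rcomp F W \<longleftrightarrow> rcomp (rcomp F W) F = rcomp F W"
proof
  assume le: "rcomp W F \<le> rcomp F W"
  show "rcomp (rcomp F W) F = rcomp F W"
  proof (rule order.antisym)
    have "rcomp F (rcomp W F) \<le> rcomp F (rcomp F W)" using le by (rule rcomp_mono[rotated]) simp
    also have "\<dots> = rcomp F W" by (simp add: rcomp_assoc[symmetric] rcomp_fuzzy_equiv_self[OF assms])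
    finally show "rcomp (rcomp F W) F \<le> rcomp F W" by (simp add: rcomp_assoc)
    show "rcomp F W \<le> rcomp (rcomp F W) F"
      by (rule rcomp_reflexive_right) (rule fuzzy_equiv_refl[OF assms])
  qed
next
  assume "rcomp (rcomp F W) F = rcomp F W"
  then show "rcomp W F \<le> rcomp F W"
    using rcomp_reflexive_left[of F "rcomp W F"] by (simp add: rcomp_assoc fuzzy_equiv_refl[OF assms])
qed

lemma WL14_fuzzy_equiv_iff:
  "fuzzy_equiv E \<Longrightarrow> WL14 V Q E \<longleftrightarrow> (\<forall>i. rcomp E (V i) \<le> rcomp (V i) E) \<and> E \<le> Q"
  by (simp add: WL14_def rconv_fuzzy_equiv)

lemma WL15_fuzzy_equiv_iff:
  "fuzzy_equiv F \<Longrightarrow> WL15 W Q F \<longleftrightarrow> (\<forall>i. rcomp (W i) F \<le> rcomp F (W i)) \<and> F \<le> Q"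
  by (simp add: WL15_def rconv_fuzzy_equiv)

lemma quot_rel_class:
  assumes "fuzzy_equiv E"
  shows "quot_rel E V (E x1) (E x2) = rcomp (rcomp E V) E x1 x2"
proof -
  have EVE: "rcomp (rcomp E V) E x y = (SUP z. rcomp E V x z \<otimes> E y z)" for x y
    by (simp add: rcomp_def fuzzy_equiv_sym[OF assms, of _ y])
  have class_invariant: "rcomp (rcomp E V) E y1 y2 = rcomp (rcomp E V) E x1 x2"
    if "E y1 = E x1" "E y2 = E x2" for y1 y2
    unfolding EVE by (simp add: rcomp_def that)
  show ?thesis
    unfolding quot_rel_def by (rule class_invariant) (rule someI[of "\<lambda>y. E y = E _"], rule refl)+
qed

lemma cokernel_rmult_le: "cokernel R b1 b2 \<otimes> R a b1 \<le> R a b2"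
proof -
  have "cokernel R b1 b2 \<le> rimp (R a b1) (R a b2)"
    unfolding cokernel_def biimp_def by (rule INF_lower2[of a]) simp_all
  then show ?thesis by (simp add: residuation)
qed

section \<open>Uniform fuzzy relations\<close>

locale uniform_fuzzy_relation =
  fixes R :: "'a \<Rightarrow> 'b \<Rightarrow> 'l::cres_lattice"
  assumes uniform: "uniform_rel R"
begin

lemma R_psi_eq_top: "R a (psi R a) = top"
  unfolding psi_def by (rule someI_ex) (use uniform in \<open>simp add: uniform_rel_def\<close>)

lemma ex_R_eq_top: "\<exists>a. R a b = top"
  using uniform by (simp add: uniform_rel_def)

lemma rmult_le_cokernel: "R a b1 \<otimes> R a b2 \<le> cokernel R b1 b2"
  using uniform by (simp add: uniform_rel_def)

lemma R_eq_cokernel_psi: "R a b = cokernel R (psi R a) b"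
proof (rule order.antisym)
  show "R a b \<le> cokernel R (psi R a) b"
    using rmult_le_cokernel[of a "psi R a" b] by (simp add: R_psi_eq_top)
  show "cokernel R (psi R a) b \<le> R a b"
    using cokernel_rmult_le[of R "psi R a" b a] by (simp add: R_psi_eq_top)
qed

lemma kernel_eq_cokernel_psi: "kernel R a1 a2 = cokernel R (psi R a1) (psi R a2)"
proof -
  have "kernel R a1 a2 = kernel (cokernel R) (psi R a1) (psi R a2)"
    unfolding kernel_def by (subst (1 2) R_eq_cokernel_psi) (rule refl)
  also have "kernel (cokernel R) = cokernel R"
    by (rule kernel_fuzzy_equiv_self[OF cokernel_fuzzy_equiv])
  finally show ?thesis .
qed

lemma kernel_eq_rcomp: "kernel R = rcomp R (rconv R)"
proof (intro ext order.antisym)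
  fix a1 a2
  let ?F = "cokernel R"
  have "kernel R a1 a2 = ?F (psi R a1) (psi R a2) \<otimes> R a2 (psi R a2)"
    by (simp add: kernel_eq_cokernel_psi R_psi_eq_top)
  also have "\<dots> \<le> rcomp R (rconv R) a1 a2"
    unfolding rcomp_def rconv_def R_eq_cokernel_psi[of a1] by (rule SUP_upper) simp
  finally show "kernel R a1 a2 \<le> rcomp R (rconv R) a1 a2" .
  have "R a1 b \<otimes> R a2 b \<le> kernel R a1 a2" for b
    unfolding kernel_eq_cokernel_psi R_eq_cokernel_psi[of a1] R_eq_cokernel_psi[of a2]
    using fuzzy_equiv_trans[OF cokernel_fuzzy_equiv, of R "psi R a1" b "psi R a2"]
    by (simp add: fuzzy_equiv_sym[OF cokernel_fuzzy_equiv, of R b])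
  then show "rcomp R (rconv R) a1 a2 \<le> kernel R a1 a2"
    unfolding rcomp_def rconv_def by (rule SUP_least)
qed

lemma cokernel_eq_rcomp: "cokernel R = rcomp (rconv R) R"
proof (intro ext order.antisym)
  fix b1 b2
  obtain a where a: "R a b1 = top" using ex_R_eq_top by blast
  have "cokernel R b1 b2 \<le> R a b1 \<otimes> R a b2"
    using cokernel_rmult_le[of R b1 b2 a] by (simp add: a)
  also have "\<dots> \<le> rcomp (rconv R) R b1 b2"
    unfolding rcomp_def rconv_def by (rule SUP_upper) simp
  finally show "cokernel R b1 b2 \<le> rcomp (rconv R) R b1 b2" .
  show "rcomp (rconv R) R b1 b2 \<le> cokernel R b1 b2"
    unfolding rcomp_def rconv_def by (rule SUP_least) (rule rmult_le_cokernel)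
qed

lemma rcomp_kernel_R: "rcomp (kernel R) R = R"
  by (rule rcomp_absorb_left)
    (simp_all add: kernel_eq_cokernel_psi R_eq_cokernel_psi fuzzy_equiv_refl
      fuzzy_equiv_trans cokernel_fuzzy_equiv)

lemma rcomp_R_cokernel: "rcomp R (cokernel R) = R"
  by (rule rcomp_absorb_right)
    (simp add: fuzzy_equiv_refl[OF cokernel_fuzzy_equiv], subst rmult_commute, rule cokernel_rmult_le)

lemma rtilde_kernel: "rtilde R (kernel R a) = cokernel R (psi R a)"
proof -
  define a' where "a' = (SOME a'. kernel R a' = kernel R a)"
  have "kernel R a' = kernel R a" unfolding a'_def by (rule someI) (rule refl)
  then have "cokernel R (psi R a') = cokernel R (psi R a)"
    by (simp add: fuzzy_equiv_class_eq_iff kernel_fuzzy_equiv cokernel_fuzzy_equiv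
        kernel_eq_cokernel_psi)
  then show ?thesis unfolding rtilde_def a'_def by simp
qed

lemma bij_betw_rtilde: "bij_betw (rtilde R) (range (kernel R)) (range (cokernel R))"
proof (rule bij_betw_imageI)
  show "inj_on (rtilde R) (range (kernel R))"
    by (auto intro!: inj_onI simp: rtilde_kernel fuzzy_equiv_class_eq_iff kernel_fuzzy_equiv
        cokernel_fuzzy_equiv kernel_eq_cokernel_psi)
  have "cokernel R b \<in> rtilde R ` range (kernel R)" for b
  proof -
    obtain a where "R a b = top" using ex_R_eq_top by blast
    then have "cokernel R (psi R a) = cokernel R b"
      by (simp add: fuzzy_equiv_class_eq_iff cokernel_fuzzy_equiv R_eq_cokernel_psi[symmetric])
    then show ?thesis by (metis rangeI image_eqI rtilde_kernel)
  qed
  then show "rtilde R ` range (kernel R) = range (cokernel R)"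
    by (auto simp: rtilde_kernel)
qed

lemma fs_iso_rtilde_iff:
  "fs_iso (range (kernel R)) (\<lambda>i. quot_rel (kernel R) (V i))
          (range (cokernel R)) (\<lambda>i. quot_rel (cokernel R) (W i)) (rtilde R)
   \<longleftrightarrow> (\<forall>i. rcomp (rcomp (kernel R) (V i)) (kernel R) = rcomp (rcomp R (W i)) (rconv R))"
proof -
  have "rcomp (rcomp (cokernel R) Wi) (cokernel R) (psi R a1) (psi R a2)
        = rcomp (rcomp R Wi) (rconv R) a1 a2" for Wi a1 a2
    by (simp add: rcomp_def rconv_def R_eq_cokernel_psi
        fuzzy_equiv_sym[OF cokernel_fuzzy_equiv, of R _ "psi R a2"])
  then show ?thesis
    by (simp add: fs_iso_def bij_betw_rtilde rtilde_kernel fun_eq_iff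
        quot_rel_class kernel_fuzzy_equiv cokernel_fuzzy_equiv)
qed

lemma rcomp_kernel_rcomp_R: "rcomp (kernel R) (rcomp R S) = rcomp R S"
  by (simp add: rcomp_assoc[symmetric] rcomp_kernel_R)

lemma rcomp_R_rcomp_cokernel: "rcomp R (rcomp (cokernel R) S) = rcomp R S"
  by (simp add: rcomp_assoc[symmetric] rcomp_R_cokernel)

lemma saturated_if_intertwines:
  assumes VR: "rcomp V R = rcomp R W"
  shows "rcomp V (kernel R) = rcomp (rcomp R W) (rconv R)"
    and "rcomp (rcomp (kernel R) V) (kernel R) = rcomp V (kernel R)"
    and "rcomp (rcomp (cokernel R) W) (cokernel R) = rcomp (cokernel R) W"
proof -
  show VE: "rcomp V (kernel R) = rcomp (rcomp R W) (rconv R)"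
    by (simp add: kernel_eq_rcomp rcomp_assoc[symmetric] VR)
  show "rcomp (rcomp (kernel R) V) (kernel R) = rcomp V (kernel R)"
    by (simp add: rcomp_assoc VE[unfolded rcomp_assoc] rcomp_kernel_rcomp_R)
  have FW: "rcomp (cokernel R) W = rcomp (rcomp (rconv R) V) R"
    by (simp add: cokernel_eq_rcomp rcomp_assoc VR)
  have "rcomp (rcomp (cokernel R) W) (cokernel R) = rcomp (rconv R) (rcomp V (rcomp R (cokernel R)))"
    unfolding FW by (simp only: rcomp_assoc)
  also have "\<dots> = rcomp (cokernel R) W"
    by (simp only: rcomp_R_cokernel FW rcomp_assoc)
  finally show "rcomp (rcomp (cokernel R) W) (cokernel R) = rcomp (cokernel R) W" .
qed

lemma intertwines_if_saturated:
  assumes VE: "rcomp V (kernel R) = rcomp (rcomp R W) (rconv R)"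
    and FWF: "rcomp (rcomp (cokernel R) W) (cokernel R) = rcomp (cokernel R) W"
  shows "rcomp V R = rcomp R W"
proof -
  have "rcomp V R = rcomp (rcomp V (kernel R)) R"
    by (simp add: rcomp_assoc rcomp_kernel_R)
  also have "\<dots> = rcomp R (rcomp W (cokernel R))"
    by (simp add: VE cokernel_eq_rcomp rcomp_assoc)
  also have "\<dots> = rcomp R (rcomp (rcomp (cokernel R) W) (cokernel R))"
    by (simp add: rcomp_R_rcomp_cokernel rcomp_assoc)
  also have "\<dots> = rcomp R W"
    by (simp add: FWF rcomp_R_rcomp_cokernel)
  finally show ?thesis .
qed

lemma intertwines_iff:
  "rcomp V R = rcomp R W \<longleftrightarrow>
     rcomp (kernel R) V \<le> rcomp V (kernel R)
   \<and> rcomp W (cokernel R) \<le> rcomp (cokernel R) W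
   \<and> rcomp (rcomp (kernel R) V) (kernel R) = rcomp (rcomp R W) (rconv R)"
  using saturated_if_intertwines[of V W] intertwines_if_saturated[of V W]
  by (auto simp: fuzzy_equiv_rcomp_le_iff[OF kernel_fuzzy_equiv]
      fuzzy_equiv_rcomp_ge_iff[OF cokernel_fuzzy_equiv])

end

theorem theorem7p4:
  fixes V :: "'i \<Rightarrow> 'a \<Rightarrow> 'a \<Rightarrow> 'l::cres_lattice"
    and W :: "'i \<Rightarrow> 'b \<Rightarrow> 'b \<Rightarrow> 'l"
    and R Z :: "'a \<Rightarrow> 'b \<Rightarrow> 'l"
  assumes "uniform_rel R" and "R \<le> Z"
  shows "WL25 V W Z R \<longleftrightarrow>
      WL14 V (rcomp Z (rconv Z)) (kernel R)
    \<and> WL15 W (rcomp (rconv Z) Z) (cokernel R)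
    \<and> fs_iso (range (kernel R)) (\<lambda>i. quot_rel (kernel R) (V i))
             (range (cokernel R)) (\<lambda>i. quot_rel (cokernel R) (W i)) (rtilde R)"
proof -
  interpret uniform_fuzzy_relation R by standard (rule assms(1))
  have "kernel R \<le> rcomp Z (rconv Z)"
    unfolding kernel_eq_rcomp by (intro rcomp_mono rconv_mono assms(2))
  moreover have "cokernel R \<le> rcomp (rconv Z) Z"
    unfolding cokernel_eq_rcomp by (intro rcomp_mono rconv_mono assms(2))
  moreover have "WL25 V W Z R \<longleftrightarrow> (\<forall>i. rcomp (V i) R = rcomp R (W i))"
    unfolding WL25_def using assms(2) by blast
  ultimately show ?thesis
    by (simp add: intertwines_iff WL14_fuzzy_equiv_iff WL15_fuzzy_equiv_iff kernel_fuzzy_equiv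
        cokernel_fuzzy_equiv fs_iso_rtilde_iff all_conj_distrib)
qed

end
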